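(* There exist constants $K_1,K_2>0$ (independent of $h$ and of the grid function) such that for every grid function $v\in\mathbb{V}_h$, \[ \|\nabla_hv\|_{l^4}\le K_1\|\nabla_hv\|^{1/2}\Big(2\|\Delta_hv\|^2+\frac{1}{L^2}\|\nabla_hv\|^2\Big)^{1/4} \] and \[ \|\nabla_hv\|_{l^6}\le K_2\|\nabla_hv\|^{1/3}\Big(16\|\Delta_hv\|^2+\frac{1}{L^2}\|\nabla_hv\|^2\Big)^{1/3}. \]
   Context: $L>0$, $M$ a positive integer, $h=L/M$, $\Omega_h=\{(ih,jh):1\le i,j\le M\}$, $\mathbb{V}_h$ the grid functions on $\{(ih,jh):0\le i,j\le M\}$ that are $L$-periodic in each direction. $\Delta_x v_{ij}=(v_{i+1,j}-v_{i-1,j})/(2h)$, $\Delta_yv_{ij}=(v_{i,j+1}-v_{i,j-1})/(2h)$, $\nabla_hv=(\Delta_xv,\Delta_yv)^T$, $\delta_x^2v_{ij}=(v_{i+1,j}-2v_{ij}+v_{i-1,j})/h^2$, similarly $\delta_y^2$, $\Delta_h=\delta_x^2+\delta_y^2$. $\|v\|^2=h^2\sum_{\Omega_h}v_h^2$, $\|\nabla_hv\|_{l^q}=(h^2\sum_{\Omega_h}|\nabla_hv_h|^q)^{1/q}$ with $|\cdot|$ Euclidean, $\|\nabla_hv\|=\|\nabla_hv\|_{l^2}$. *)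

theory Defs
  imports Complex_Main
begin

text \<open>Grid functions on the periodic grid: v i j is the value at (i h, j h),
  extended M-periodically in both indices (L-periodic in space).\<close>

definition periodic_grid :: "nat \<Rightarrow> (int \<Rightarrow> int \<Rightarrow> real) \<Rightarrow> bool" where
  "periodic_grid M v \<longleftrightarrow> (\<forall>i j. v (i + int M) j = v i j \<and> v i (j + int M) = v i j)"

definition Dx :: "real \<Rightarrow> (int \<Rightarrow> int \<Rightarrow> real) \<Rightarrow> int \<Rightarrow> int \<Rightarrow> real" where
  "Dx h v i j = (v (i + 1) j - v (i - 1) j) / (2 * h)"

definition Dy :: "real \<Rightarrow> (int \<Rightarrow> int \<Rightarrow> real) \<Rightarrow> int \<Rightarrow> int \<Rightarrow> real" where
  "Dy h v i j = (v i (j + 1) - v i (j - 1)) / (2 * h)"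

definition dxx :: "real \<Rightarrow> (int \<Rightarrow> int \<Rightarrow> real) \<Rightarrow> int \<Rightarrow> int \<Rightarrow> real" where
  "dxx h v i j = (v (i + 1) j - 2 * v i j + v (i - 1) j) / h\<^sup>2"

definition dyy :: "real \<Rightarrow> (int \<Rightarrow> int \<Rightarrow> real) \<Rightarrow> int \<Rightarrow> int \<Rightarrow> real" where
  "dyy h v i j = (v i (j + 1) - 2 * v i j + v i (j - 1)) / h\<^sup>2"

definition lap_h :: "real \<Rightarrow> (int \<Rightarrow> int \<Rightarrow> real) \<Rightarrow> int \<Rightarrow> int \<Rightarrow> real" where
  "lap_h h v i j = dxx h v i j + dyy h v i j"

definition grad_abs :: "real \<Rightarrow> (int \<Rightarrow> int \<Rightarrow> real) \<Rightarrow> int \<Rightarrow> int \<Rightarrow> real" where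
  "grad_abs h v i j = sqrt ((Dx h v i j)\<^sup>2 + (Dy h v i j)\<^sup>2)"

definition l2_norm :: "real \<Rightarrow> nat \<Rightarrow> (int \<Rightarrow> int \<Rightarrow> real) \<Rightarrow> real" where
  "l2_norm h M f = sqrt (h\<^sup>2 * (\<Sum>i\<in>{1..int M}. \<Sum>j\<in>{1..int M}. (f i j)\<^sup>2))"

definition grad_lq :: "real \<Rightarrow> nat \<Rightarrow> real \<Rightarrow> (int \<Rightarrow> int \<Rightarrow> real) \<Rightarrow> real" where
  "grad_lq h M q v = (h\<^sup>2 * (\<Sum>i\<in>{1..int M}. \<Sum>j\<in>{1..int M}. (grad_abs h v i j) powr q)) powr (1 / q)"

end

theory Submission
  imports Defs "HOL-Analysis.Convex"
begin

text \<open>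
  The argument is Ladyzhenskaya's, on the periodic grid. A nonnegative grid function r is
  bounded at every node by its mean plus its total variation along the row through that node,
  and likewise along the column; multiplying the two bounds and summing gives
  \<open>\<Sum> r\<^sup>2 \<le> (\<Sum> r / M + \<Sum> |D\<^sub>x r|) (\<Sum> r / M + \<Sum> |D\<^sub>y r|)\<close>.
  Taking \<open>r = g\<^sup>2\<close> and \<open>r = g\<^sup>3\<close> and estimating the variations by Cauchy-Schwarz bounds
  the \<open>l\<^sup>4\<close> and \<open>l\<^sup>6\<close> norms of g by its \<open>l\<^sup>2\<close> norm and the energy of its forward
  differences. For \<open>g = |\<nabla>\<^sub>h v|\<close> the reverse triangle inequality bounds that energy by
  the squares of the second differences of v, and summation by parts
  (\<open>\<Sum> (\<delta>\<^sub>x\<^sub>y v)\<^sup>2 = \<Sum> \<delta>\<^sub>x\<^sup>2 v \<delta>\<^sub>y\<^sup>2 v\<close>) turns these into \<open>\<parallel>\<Delta>\<^sub>h v\<parallel>\<^sup>2\<close>.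
\<close>

lemma sum_periodic_shift_one:
  fixes p :: "int \<Rightarrow> 'a::comm_monoid_add"
  assumes "\<And>i. p (i + int M) = p i"
  shows "(\<Sum>i\<in>{1..int M}. p (i + 1)) = (\<Sum>i\<in>{1..int M}. p i)"
proof (cases "M = 0")
  case False
  have "(\<Sum>i\<in>{1..int M}. p (i + 1)) = (\<Sum>i\<in>{2..int M + 1}. p i)"
    by (rule sum.reindex_bij_witness[of _ "\<lambda>i. i - 1" "\<lambda>i. i + 1"]) auto
  also have "{2..int M + 1} = insert (int M + 1) {2..int M}"
    using False by auto
  also have "(\<Sum>i\<in>insert (int M + 1) {2..int M}. p i) = p (int M + 1) + (\<Sum>i\<in>{2..int M}. p i)"
    by simp
  also have "p (int M + 1) = p 1"
    using assms[of 1] by (simp add: add.commute)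
  also have "p 1 + (\<Sum>i\<in>{2..int M}. p i) = (\<Sum>i\<in>insert 1 {2..int M}. p i)"
    by simp
  also have "insert 1 {2..int M} = {1..int M}"
    using False by auto
  finally show ?thesis .
qed simp

lemma sum_periodic_shift:
  fixes p :: "int \<Rightarrow> 'a::comm_monoid_add"
  assumes periodic: "\<And>i. p (i + int M) = p i"
  shows "(\<Sum>i\<in>{1..int M}. p (i + c)) = (\<Sum>i\<in>{1..int M}. p i)"
proof -
  have shifted_periodic: "p (i + int M + c) = p (i + c)" for i c
    using periodic[of "i + c"] by (simp add: ac_simps)
  show ?thesis
  proof (induction c rule: int_induct[where k = 0])
    case (step1 c)
    have "(\<Sum>i\<in>{1..int M}. p (i + 1 + c)) = (\<Sum>i\<in>{1..int M}. p (i + c))"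
      by (rule sum_periodic_shift_one) (simp add: shifted_periodic)
    with step1 show ?case by (simp add: ac_simps)
  next
    case (step2 c)
    have "(\<Sum>i\<in>{1..int M}. p (i + 1 + (c - 1))) = (\<Sum>i\<in>{1..int M}. p (i + (c - 1)))"
      by (rule sum_periodic_shift_one) (simp add: shifted_periodic)
    with step2 show ?case by (simp add: ac_simps)
  qed simp
qed

lemma sum_int_telescope:
  fixes q :: "int \<Rightarrow> 'a::ab_group_add"
  assumes "a \<le> b"
  shows "(\<Sum>i\<in>{a..<b}. q (i + 1) - q i) = q b - q a"
  using assms
proof (induction b rule: int_ge_induct)
  case (step b)
  then have "{a..<b + 1} = insert b {a..<b}" by auto
  with step.IH show ?case by simp
qed simp

lemma abs_diff_le_total_variation:
  fixes q :: "int \<Rightarrow> real"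
  assumes "k \<in> {1..int M}" "m \<in> {1..int M}"
  shows "\<bar>q k - q m\<bar> \<le> (\<Sum>i\<in>{1..int M}. \<bar>q (i + 1) - q i\<bar>)"
proof -
  have ordered: "\<bar>q b - q a\<bar> \<le> (\<Sum>i\<in>{1..int M}. \<bar>q (i + 1) - q i\<bar>)"
    if "a \<le> b" "a \<in> {1..int M}" "b \<in> {1..int M}" for a b
  proof -
    have "\<bar>q b - q a\<bar> = \<bar>\<Sum>i\<in>{a..<b}. q (i + 1) - q i\<bar>"
      by (simp only: sum_int_telescope[OF \<open>a \<le> b\<close>])
    also have "\<dots> \<le> (\<Sum>i\<in>{a..<b}. \<bar>q (i + 1) - q i\<bar>)"
      by (rule sum_abs)
    also have "\<dots> \<le> (\<Sum>i\<in>{1..int M}. \<bar>q (i + 1) - q i\<bar>)"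
      by (rule sum_mono2) (use that in auto)
    finally show ?thesis .
  qed
  show ?thesis
    using ordered[of m k] ordered[of k m] assms by (cases "m \<le> k") (auto simp: abs_minus_commute)
qed

lemma exists_le_average:
  fixes q :: "'a \<Rightarrow> real"
  assumes "finite A" "A \<noteq> {}"
  shows "\<exists>m\<in>A. q m \<le> sum q A / card A"
proof (rule ccontr)
  assume "\<not> ?thesis"
  then have "(\<Sum>m\<in>A. sum q A / card A) < sum q A"
    using assms by (intro sum_strict_mono) (auto simp: not_le)
  then show False
    using assms by simp
qed

lemma le_average_plus_total_variation:
  fixes q :: "int \<Rightarrow> real"
  assumes "M \<ge> 1" "k \<in> {1..int M}"
  shows "q k \<le> (\<Sum>i\<in>{1..int M}. q i) / real M + (\<Sum>i\<in>{1..int M}. \<bar>q (i + 1) - q i\<bar>)"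
proof -
  obtain m where "m \<in> {1..int M}" "q m \<le> (\<Sum>i\<in>{1..int M}. q i) / real M"
    using exists_le_average[of "{1..int M}" q] assms(1) by auto
  moreover have "q k \<le> q m + \<bar>q k - q m\<bar>"
    by simp
  ultimately show ?thesis
    using abs_diff_le_total_variation[OF assms(2), of m q] by linarith
qed

definition grid_sum :: "nat \<Rightarrow> (int \<Rightarrow> int \<Rightarrow> real) \<Rightarrow> real" where
  "grid_sum M f = (\<Sum>i\<in>{1..int M}. \<Sum>j\<in>{1..int M}. f i j)"

lemma grid_sum_add: "grid_sum M (\<lambda>i j. f i j + g i j) = grid_sum M f + grid_sum M g"
  unfolding grid_sum_def by (simp add: sum.distrib)

lemma grid_sum_cmult: "grid_sum M (\<lambda>i j. c * f i j) = c * grid_sum M f"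
  unfolding grid_sum_def by (simp add: sum_distrib_left)

lemma grid_sum_mono: "(\<And>i j. f i j \<le> g i j) \<Longrightarrow> grid_sum M f \<le> grid_sum M g"
  unfolding grid_sum_def by (intro sum_mono) auto

lemma grid_sum_nonneg: "(\<And>i j. 0 \<le> f i j) \<Longrightarrow> 0 \<le> grid_sum M f"
  unfolding grid_sum_def by (intro sum_nonneg) auto

lemma grid_sum_transpose: "grid_sum M (\<lambda>i j. f j i) = grid_sum M f"
  unfolding grid_sum_def by (rule sum.swap)

lemma grid_sum_mult_le_sqrt:
  "grid_sum M (\<lambda>i j. f i j * g i j)
     \<le> sqrt (grid_sum M (\<lambda>i j. (f i j)\<^sup>2)) * sqrt (grid_sum M (\<lambda>i j. (g i j)\<^sup>2))"
proof -
  let ?I = "{1..int M} \<times> {1..int M}"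
  have as_product: "grid_sum M F = (\<Sum>(i, j)\<in>?I. F i j)" for F
    unfolding grid_sum_def by (simp add: sum.cartesian_product)
  have "(\<Sum>(i, j)\<in>?I. f i j * g i j)\<^sup>2 \<le> (\<Sum>(i, j)\<in>?I. (f i j)\<^sup>2) * (\<Sum>(i, j)\<in>?I. (g i j)\<^sup>2)"
    using Cauchy_Schwarz_ineq_sum[of "case_prod f" "case_prod g" ?I] by (simp add: case_prod_unfold)
  then show ?thesis
    unfolding as_product by (simp add: real_le_rsqrt flip: real_sqrt_mult)
qed

lemma periodic_gridD:
  assumes "periodic_grid M v"
  shows "v (i + int M) j = v i j" "v i (j + int M) = v i j"
    "v (i + int M + c) j = v (i + c) j" "v (i + int M - c) j = v (i - c) j"
    "v i (j + int M + c) = v i (j + c)" "v i (j + int M - c) = v i (j - c)"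
  using assms unfolding periodic_grid_def by (metis add.commute add.left_commute diff_add_eq)+

lemma periodic_grid_comp: "periodic_grid M f \<Longrightarrow> periodic_grid M (\<lambda>i j. \<phi> (f i j))"
  unfolding periodic_grid_def by simp

lemma periodic_grid_transpose: "periodic_grid M (\<lambda>i j. g j i) \<longleftrightarrow> periodic_grid M g"
  unfolding periodic_grid_def by blast

lemma grid_sum_shift:
  assumes "periodic_grid M f"
  shows "grid_sum M (\<lambda>i j. f (i + a) (j + b)) = grid_sum M f"
proof -
  have "grid_sum M (\<lambda>i j. f (i + a) (j + b)) = (\<Sum>i\<in>{1..int M}. \<Sum>j\<in>{1..int M}. f (i + a) j)"
    unfolding grid_sum_def
    by (intro sum.cong refl sum_periodic_shift) (use assms in \<open>simp add: periodic_gridD\<close>)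
  also have "\<dots> = (\<Sum>j\<in>{1..int M}. \<Sum>i\<in>{1..int M}. f i j)"
    by (subst sum.swap, intro sum.cong refl sum_periodic_shift) (use assms in \<open>simp add: periodic_gridD\<close>)
  finally show ?thesis
    using grid_sum_transpose[of M f] unfolding grid_sum_def by simp
qed

lemma grid_sum_sq_le_of_bounds:
  fixes r :: "int \<Rightarrow> int \<Rightarrow> real"
  assumes nonneg: "\<And>i j. 0 \<le> r i j"
    and bound_A: "\<And>i j. i \<in> {1..int M} \<Longrightarrow> j \<in> {1..int M} \<Longrightarrow> r i j \<le> A j"
    and bound_B: "\<And>i j. i \<in> {1..int M} \<Longrightarrow> j \<in> {1..int M} \<Longrightarrow> r i j \<le> B i"
  shows "grid_sum M (\<lambda>i j. (r i j)\<^sup>2) \<le> (\<Sum>j\<in>{1..int M}. A j) * (\<Sum>i\<in>{1..int M}. B i)"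
proof -
  have "grid_sum M (\<lambda>i j. (r i j)\<^sup>2) \<le> (\<Sum>i\<in>{1..int M}. \<Sum>j\<in>{1..int M}. B i * A j)"
    unfolding grid_sum_def power2_eq_square
  proof (intro sum_mono)
    fix i j assume "i \<in> {1..int M}" "j \<in> {1..int M}"
    then show "r i j * r i j \<le> B i * A j"
      using bound_A bound_B nonneg by (metis mult.commute mult_mono order_trans)
  qed
  also have "\<dots> = (\<Sum>j\<in>{1..int M}. \<Sum>i\<in>{1..int M}. A j * B i)"
    by (subst sum.swap) (simp add: mult.commute)
  also have "\<dots> = (\<Sum>j\<in>{1..int M}. A j) * (\<Sum>i\<in>{1..int M}. B i)"
    by (simp add: sum_product)
  finally show ?thesis .
qed

lemma grid_sum_sq_le_ladyzhenskaya:
  fixes r :: "int \<Rightarrow> int \<Rightarrow> real"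
  assumes "M \<ge> 1" and nonneg: "\<And>i j. 0 \<le> r i j"
  shows "grid_sum M (\<lambda>i j. (r i j)\<^sup>2)
    \<le> (grid_sum M r / real M + grid_sum M (\<lambda>i j. \<bar>r (i + 1) j - r i j\<bar>))
      * (grid_sum M r / real M + grid_sum M (\<lambda>i j. \<bar>r i (j + 1) - r i j\<bar>))"
proof -
  define A where "A j = (\<Sum>i\<in>{1..int M}. r i j) / real M + (\<Sum>i\<in>{1..int M}. \<bar>r (i + 1) j - r i j\<bar>)" for j
  define B where "B i = (\<Sum>j\<in>{1..int M}. r i j) / real M + (\<Sum>j\<in>{1..int M}. \<bar>r i (j + 1) - r i j\<bar>)" for i
  have "grid_sum M (\<lambda>i j. (r i j)\<^sup>2) \<le> (\<Sum>j\<in>{1..int M}. A j) * (\<Sum>i\<in>{1..int M}. B i)"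
  proof (rule grid_sum_sq_le_of_bounds[OF nonneg])
    fix i j assume "i \<in> {1..int M}" "j \<in> {1..int M}"
    then show "r i j \<le> A j" "r i j \<le> B i"
      unfolding A_def B_def
      using le_average_plus_total_variation[OF \<open>M \<ge> 1\<close>, of i "\<lambda>i. r i j"]
        le_average_plus_total_variation[OF \<open>M \<ge> 1\<close>, of j "r i"] by simp_all
  qed
  also have "(\<Sum>j\<in>{1..int M}. A j) = grid_sum M r / real M + grid_sum M (\<lambda>i j. \<bar>r (i + 1) j - r i j\<bar>)"
  proof -
    have by_columns: "(\<Sum>j\<in>{1..int M}. \<Sum>i\<in>{1..int M}. f i j) = grid_sum M f" for f
      using grid_sum_transpose[of M f] unfolding grid_sum_def by simp
    show ?thesis
      unfolding A_def by (simp add: sum.distrib by_columns flip: sum_divide_distrib)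
  qed
  also have "(\<Sum>i\<in>{1..int M}. B i) = grid_sum M r / real M + grid_sum M (\<lambda>i j. \<bar>r i (j + 1) - r i j\<bar>)"
    unfolding B_def grid_sum_def by (simp add: sum.distrib flip: sum_divide_distrib)
  finally show ?thesis .
qed

lemma power2_add_le: "((x::real) + y)\<^sup>2 \<le> 2 * x\<^sup>2 + 2 * y\<^sup>2"
proof -
  have "0 \<le> (x - y)\<^sup>2" by simp
  then show ?thesis by (simp add: power2_eq_square algebra_simps)
qed

lemma abs_diff_cubes_le: "\<bar>(a::real)^3 - b^3\<bar> \<le> 3/2 * \<bar>a - b\<bar> * (a\<^sup>2 + b\<^sup>2)"
proof -
  have factored: "a^3 - b^3 = (a - b) * (a\<^sup>2 + a * b + b\<^sup>2)"
    by (simp add: power2_eq_square power3_eq_cube algebra_simps)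
  have "0 \<le> (a + b)\<^sup>2 + a\<^sup>2 + b\<^sup>2" "0 \<le> (a - b)\<^sup>2"
    by simp_all
  then have bounds: "0 \<le> a\<^sup>2 + a * b + b\<^sup>2" "a\<^sup>2 + a * b + b\<^sup>2 \<le> 3/2 * (a\<^sup>2 + b\<^sup>2)"
    by (simp_all add: power2_eq_square algebra_simps)
  then have "\<bar>a^3 - b^3\<bar> = \<bar>a - b\<bar> * (a\<^sup>2 + a * b + b\<^sup>2)"
    by (simp add: factored abs_mult)
  also have "\<dots> \<le> \<bar>a - b\<bar> * (3/2 * (a\<^sup>2 + b\<^sup>2))"
    using bounds by (intro mult_left_mono) simp_all
  finally show ?thesis
    by (simp only: mult_ac)
qed

lemma grid_sum_sq_add_le:
  assumes "grid_sum M (\<lambda>i j. (g i j)\<^sup>2) = grid_sum M (\<lambda>i j. (f i j)\<^sup>2)"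
  shows "grid_sum M (\<lambda>i j. (g i j + f i j)\<^sup>2) \<le> 4 * grid_sum M (\<lambda>i j. (f i j)\<^sup>2)"
proof -
  have "grid_sum M (\<lambda>i j. (g i j + f i j)\<^sup>2) \<le> grid_sum M (\<lambda>i j. 2 * (g i j)\<^sup>2 + 2 * (f i j)\<^sup>2)"
    by (intro grid_sum_mono power2_add_le)
  also have "\<dots> = 4 * grid_sum M (\<lambda>i j. (f i j)\<^sup>2)"
    unfolding grid_sum_add grid_sum_cmult assms by simp
  finally show ?thesis .
qed

lemma sqrt_grid_sum_sq_add_le:
  assumes "grid_sum M (\<lambda>i j. (g i j)\<^sup>2) = grid_sum M (\<lambda>i j. (f i j)\<^sup>2)"
  shows "sqrt (grid_sum M (\<lambda>i j. (g i j + f i j)\<^sup>2)) \<le> 2 * sqrt (grid_sum M (\<lambda>i j. (f i j)\<^sup>2))"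
  using real_sqrt_le_mono[OF grid_sum_sq_add_le[OF assms]] by (simp add: real_sqrt_mult)

text \<open>For every spacing h this is \<open>\<parallel>D\<^sup>+ g\<parallel>\<^sup>2\<close>: the factor \<open>h\<^sup>2\<close> of the discrete norm cancels
  the \<open>1 / h\<^sup>2\<close> of the squared forward difference quotients.\<close>

definition grid_dirichlet :: "nat \<Rightarrow> (int \<Rightarrow> int \<Rightarrow> real) \<Rightarrow> real" where
  "grid_dirichlet M g =
     grid_sum M (\<lambda>i j. (g (i + 1) j - g i j)\<^sup>2) + grid_sum M (\<lambda>i j. (g i (j + 1) - g i j)\<^sup>2)"

lemma grid_dirichlet_transpose: "grid_dirichlet M (\<lambda>i j. g j i) = grid_dirichlet M g"
  unfolding grid_dirichlet_def
  using grid_sum_transpose[of M "\<lambda>i j. (g (i + 1) j - g i j)\<^sup>2"]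
    grid_sum_transpose[of M "\<lambda>i j. (g i (j + 1) - g i j)\<^sup>2"] by simp

lemma grid_dirichlet_nonneg: "0 \<le> grid_dirichlet M g"
  unfolding grid_dirichlet_def by (simp add: grid_sum_nonneg)

lemma grid_sum_forward_diff_sq_le_dirichlet:
  "grid_sum M (\<lambda>i j. (g (i + 1) j - g i j)\<^sup>2) \<le> grid_dirichlet M g"
  unfolding grid_dirichlet_def by (simp add: grid_sum_nonneg)

lemma grid_sum_abs_forward_diff_squares_le:
  assumes "periodic_grid M g"
  shows "grid_sum M (\<lambda>i j. \<bar>(g (i + 1) j)\<^sup>2 - (g i j)\<^sup>2\<bar>)
    \<le> 2 * sqrt (grid_dirichlet M g) * sqrt (grid_sum M (\<lambda>i j. (g i j)\<^sup>2))"
proof -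
  have shifted: "grid_sum M (\<lambda>i j. (g (i + 1) j)\<^sup>2) = grid_sum M (\<lambda>i j. (g i j)\<^sup>2)"
    using grid_sum_shift[OF periodic_grid_comp[OF assms], where a = 1 and b = 0] by simp
  have "grid_sum M (\<lambda>i j. \<bar>(g (i + 1) j)\<^sup>2 - (g i j)\<^sup>2\<bar>)
      = grid_sum M (\<lambda>i j. \<bar>g (i + 1) j - g i j\<bar> * \<bar>g (i + 1) j + g i j\<bar>)"
    by (simp add: power2_eq_square square_diff_square_factored abs_mult mult.commute)
  also have "\<dots> \<le> sqrt (grid_sum M (\<lambda>i j. (g (i + 1) j - g i j)\<^sup>2))
      * sqrt (grid_sum M (\<lambda>i j. (g (i + 1) j + g i j)\<^sup>2))"
    using grid_sum_mult_le_sqrt[of M "\<lambda>i j. \<bar>g (i + 1) j - g i j\<bar>" "\<lambda>i j. \<bar>g (i + 1) j + g i j\<bar>"]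
    by simp
  also have "\<dots> \<le> sqrt (grid_dirichlet M g) * (2 * sqrt (grid_sum M (\<lambda>i j. (g i j)\<^sup>2)))"
    using sqrt_grid_sum_sq_add_le[OF shifted] grid_sum_forward_diff_sq_le_dirichlet[of M g]
    by (intro mult_mono) (simp_all add: grid_sum_nonneg grid_dirichlet_nonneg)
  finally show ?thesis
    by (simp only: mult_ac)
qed

lemma grid_sum_abs_forward_diff_cubes_le:
  assumes "periodic_grid M g"
  shows "grid_sum M (\<lambda>i j. \<bar>(g (i + 1) j)^3 - (g i j)^3\<bar>)
    \<le> 3 * sqrt (grid_dirichlet M g) * sqrt (grid_sum M (\<lambda>i j. (g i j)^4))"
proof -
  have shifted: "grid_sum M (\<lambda>i j. ((g (i + 1) j)\<^sup>2)\<^sup>2) = grid_sum M (\<lambda>i j. ((g i j)\<^sup>2)\<^sup>2)"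
    using grid_sum_shift[OF periodic_grid_comp[OF assms], where a = 1 and b = 0] by simp
  have "grid_sum M (\<lambda>i j. \<bar>(g (i + 1) j)^3 - (g i j)^3\<bar>)
      \<le> 3/2 * grid_sum M (\<lambda>i j. \<bar>g (i + 1) j - g i j\<bar> * ((g (i + 1) j)\<^sup>2 + (g i j)\<^sup>2))"
    unfolding grid_sum_cmult[symmetric] by (intro grid_sum_mono) (metis abs_diff_cubes_le mult.assoc)
  also have "\<dots> \<le> 3/2 * (sqrt (grid_sum M (\<lambda>i j. (g (i + 1) j - g i j)\<^sup>2))
      * sqrt (grid_sum M (\<lambda>i j. ((g (i + 1) j)\<^sup>2 + (g i j)\<^sup>2)\<^sup>2)))"
    using grid_sum_mult_le_sqrt[of M "\<lambda>i j. \<bar>g (i + 1) j - g i j\<bar>" "\<lambda>i j. (g (i + 1) j)\<^sup>2 + (g i j)\<^sup>2"]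
    by simp
  also have "\<dots> \<le> 3/2 * (sqrt (grid_dirichlet M g) * (2 * sqrt (grid_sum M (\<lambda>i j. (g i j)^4))))"
    using sqrt_grid_sum_sq_add_le[OF shifted] grid_sum_forward_diff_sq_le_dirichlet[of M g]
    by (intro mult_left_mono mult_mono) (simp_all add: grid_sum_nonneg grid_dirichlet_nonneg)
  finally show ?thesis
    by (simp add: mult_ac)
qed

lemma grid_sum_pow4_le:
  assumes "M \<ge> 1" "periodic_grid M g" "\<And>i j. 0 \<le> g i j"
  shows "grid_sum M (\<lambda>i j. (g i j)^4)
    \<le> (grid_sum M (\<lambda>i j. (g i j)\<^sup>2) / real M
        + 2 * sqrt (grid_dirichlet M g) * sqrt (grid_sum M (\<lambda>i j. (g i j)\<^sup>2)))\<^sup>2"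
    (is "_ \<le> ?c\<^sup>2")
proof -
  let ?F = "grid_sum M (\<lambda>i j. (g i j)\<^sup>2)"
  have var_x: "grid_sum M (\<lambda>i j. \<bar>(g (i + 1) j)\<^sup>2 - (g i j)\<^sup>2\<bar>) \<le> 2 * sqrt (grid_dirichlet M g) * sqrt ?F"
    using assms(2) by (rule grid_sum_abs_forward_diff_squares_le)
  have var_y: "grid_sum M (\<lambda>i j. \<bar>(g i (j + 1))\<^sup>2 - (g i j)\<^sup>2\<bar>) \<le> 2 * sqrt (grid_dirichlet M g) * sqrt ?F"
    using grid_sum_abs_forward_diff_squares_le[of M "\<lambda>i j. g j i"] assms(2)
      grid_sum_transpose[of M "\<lambda>i j. \<bar>(g i (j + 1))\<^sup>2 - (g i j)\<^sup>2\<bar>"]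
      grid_sum_transpose[of M "\<lambda>i j. (g i j)\<^sup>2"]
    by (simp add: periodic_grid_transpose[of M g] grid_dirichlet_transpose[of M g])
  have "grid_sum M (\<lambda>i j. (g i j)^4) = grid_sum M (\<lambda>i j. ((g i j)\<^sup>2)\<^sup>2)"
    by simp
  also have "\<dots> \<le> (?F / real M + grid_sum M (\<lambda>i j. \<bar>(g (i + 1) j)\<^sup>2 - (g i j)\<^sup>2\<bar>))
        * (?F / real M + grid_sum M (\<lambda>i j. \<bar>(g i (j + 1))\<^sup>2 - (g i j)\<^sup>2\<bar>))"
    using assms(1) by (rule grid_sum_sq_le_ladyzhenskaya) simp
  also have "\<dots> \<le> ?c * ?c"
    using var_x var_y by (intro mult_mono add_left_mono) (simp_all add: grid_sum_nonneg grid_dirichlet_nonneg)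
  also have "\<dots> = ?c\<^sup>2"
    by (rule power2_eq_square[symmetric])
  finally show ?thesis .
qed

lemma grid_sum_pow6_le:
  assumes "M \<ge> 1" "periodic_grid M g" "\<And>i j. 0 \<le> g i j"
  shows "grid_sum M (\<lambda>i j. (g i j)^6)
    \<le> grid_sum M (\<lambda>i j. (g i j)^4)
      * (sqrt (grid_sum M (\<lambda>i j. (g i j)\<^sup>2)) / real M + 3 * sqrt (grid_dirichlet M g))\<^sup>2"
proof -
  let ?F = "grid_sum M (\<lambda>i j. (g i j)\<^sup>2)" and ?X = "grid_sum M (\<lambda>i j. (g i j)^4)"
  let ?c = "sqrt ?X * (sqrt ?F / real M + 3 * sqrt (grid_dirichlet M g))"
  have "(\<lambda>i j. g i j * (g i j)\<^sup>2) = (\<lambda>i j. (g i j)^3)"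
    by (simp add: power2_eq_square power3_eq_cube mult.assoc)
  then have cubes: "grid_sum M (\<lambda>i j. (g i j)^3) \<le> sqrt ?F * sqrt ?X"
    using grid_sum_mult_le_sqrt[of M g "\<lambda>i j. (g i j)\<^sup>2"] by simp
  have var_x: "grid_sum M (\<lambda>i j. \<bar>(g (i + 1) j)^3 - (g i j)^3\<bar>) \<le> 3 * sqrt (grid_dirichlet M g) * sqrt ?X"
    using assms(2) by (rule grid_sum_abs_forward_diff_cubes_le)
  have var_y: "grid_sum M (\<lambda>i j. \<bar>(g i (j + 1))^3 - (g i j)^3\<bar>) \<le> 3 * sqrt (grid_dirichlet M g) * sqrt ?X"
    using grid_sum_abs_forward_diff_cubes_le[of M "\<lambda>i j. g j i"] assms(2)
      grid_sum_transpose[of M "\<lambda>i j. \<bar>(g i (j + 1))^3 - (g i j)^3\<bar>"]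
      grid_sum_transpose[of M "\<lambda>i j. (g i j)^4"]
    by (simp add: periodic_grid_transpose[of M g] grid_dirichlet_transpose[of M g])
  have bound: "grid_sum M (\<lambda>i j. (g i j)^3) / real M + V \<le> ?c"
    if "V \<le> 3 * sqrt (grid_dirichlet M g) * sqrt ?X" for V
    using that divide_right_mono[OF cubes, of "real M"] by (simp add: algebra_simps)
  have "grid_sum M (\<lambda>i j. ((g i j)^3)\<^sup>2)
      \<le> (grid_sum M (\<lambda>i j. (g i j)^3) / real M + grid_sum M (\<lambda>i j. \<bar>(g (i + 1) j)^3 - (g i j)^3\<bar>))
        * (grid_sum M (\<lambda>i j. (g i j)^3) / real M + grid_sum M (\<lambda>i j. \<bar>(g i (j + 1))^3 - (g i j)^3\<bar>))"
    using assms(1) by (rule grid_sum_sq_le_ladyzhenskaya) (simp add: assms(3))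
  also have "\<dots> \<le> ?c * ?c"
    using bound[OF var_x] bound[OF var_y] assms(3)
    by (intro mult_mono) (simp_all add: grid_sum_nonneg grid_dirichlet_nonneg)
  also have "\<dots> = ?X * (sqrt ?F / real M + 3 * sqrt (grid_dirichlet M g))\<^sup>2"
    by (simp add: power2_eq_square grid_sum_nonneg)
  finally show ?thesis
    by simp
qed

lemma l2_norm_eq:
  assumes "0 \<le> h"
  shows "l2_norm h M f = h * sqrt (grid_sum M (\<lambda>i j. (f i j)\<^sup>2))"
  unfolding l2_norm_def grid_sum_def using assms by (simp add: real_sqrt_mult)

lemma grid_l4_interpolation:
  assumes "M \<ge> 1" "periodic_grid M g" "\<And>i j. 0 \<le> g i j" "h > 0"
  shows "h\<^sup>2 * grid_sum M (\<lambda>i j. (g i j)^4)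
    \<le> 4 * (l2_norm h M g)\<^sup>2 * (2 * grid_dirichlet M g + (l2_norm h M g)\<^sup>2 / (h * real M)\<^sup>2)"
proof -
  define F where "F = grid_sum M (\<lambda>i j. (g i j)\<^sup>2)"
  define E where "E = grid_dirichlet M g"
  define G where "G = l2_norm h M g"
  define L where "L = h * real M"
  have nonneg: "0 \<le> F" "0 \<le> E"
    by (simp_all add: F_def E_def grid_sum_nonneg grid_dirichlet_nonneg)
  have L: "L > 0"
    using assms(1,4) by (simp add: L_def)
  have G: "G = h * sqrt F"
    using assms(4) by (simp add: G_def F_def l2_norm_eq)
  have scaled: "h * (F / real M + 2 * sqrt E * sqrt F) = G\<^sup>2 / L + 2 * sqrt E * G"
    using assms(4) nonneg by (simp add: G L_def power2_eq_square field_simps)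
  have "h\<^sup>2 * grid_sum M (\<lambda>i j. (g i j)^4) \<le> h\<^sup>2 * (F / real M + 2 * sqrt E * sqrt F)\<^sup>2"
    unfolding F_def E_def by (intro mult_left_mono grid_sum_pow4_le assms) simp
  also have "\<dots> = (G\<^sup>2 / L + 2 * sqrt E * G)\<^sup>2"
    by (simp only: scaled[symmetric] power_mult_distrib)
  also have "\<dots> \<le> 2 * (G\<^sup>2 / L)\<^sup>2 + 2 * (2 * sqrt E * G)\<^sup>2"
    by (rule power2_add_le)
  also have "\<dots> \<le> 4 * G\<^sup>2 * (2 * E + G\<^sup>2 / L\<^sup>2)"
    using nonneg by (simp add: power_mult_distrib power_divide algebra_simps divide_right_mono)
  finally show ?thesis
    by (simp add: E_def G_def L_def)
qed

lemma grid_l6_interpolation: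
  assumes "M \<ge> 1" "periodic_grid M g" "\<And>i j. 0 \<le> g i j" "h > 0"
  shows "h\<^sup>2 * grid_sum M (\<lambda>i j. (g i j)^6)
    \<le> 8 * (l2_norm h M g)\<^sup>2 * (16 * grid_dirichlet M g + (l2_norm h M g)\<^sup>2 / (h * real M)\<^sup>2)\<^sup>2"
proof -
  define F where "F = grid_sum M (\<lambda>i j. (g i j)\<^sup>2)"
  define E where "E = grid_dirichlet M g"
  define G where "G = l2_norm h M g"
  define L where "L = h * real M"
  define B where "B = 16 * E + G\<^sup>2 / L\<^sup>2"
  have nonneg: "0 \<le> F" "0 \<le> E" "0 \<le> B"
    by (simp_all add: F_def E_def B_def grid_sum_nonneg grid_dirichlet_nonneg)
  have L: "L > 0"
    using assms(1,4) by (simp add: L_def)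
  have l4: "h\<^sup>2 * grid_sum M (\<lambda>i j. (g i j)^4) \<le> 4 * G\<^sup>2 * B"
  proof -
    have "h\<^sup>2 * grid_sum M (\<lambda>i j. (g i j)^4) \<le> 4 * G\<^sup>2 * (2 * E + G\<^sup>2 / L\<^sup>2)"
      unfolding E_def G_def L_def using assms by (rule grid_l4_interpolation)
    also have "\<dots> \<le> 4 * G\<^sup>2 * B"
      using nonneg unfolding B_def by (intro mult_left_mono) simp_all
    finally show ?thesis .
  qed
  have "sqrt F / real M = G / L"
    using assms(4) by (simp add: G_def F_def[symmetric] l2_norm_eq L_def)
  then have factor: "(sqrt F / real M + 3 * sqrt E)\<^sup>2 \<le> 2 * B"
    using power2_add_le[of "G / L" "3 * sqrt E"] nonneg
    by (simp add: B_def power_mult_distrib power_divide)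
  have "h\<^sup>2 * grid_sum M (\<lambda>i j. (g i j)^6)
      \<le> (h\<^sup>2 * grid_sum M (\<lambda>i j. (g i j)^4)) * (sqrt F / real M + 3 * sqrt E)\<^sup>2"
    unfolding F_def E_def mult.assoc by (intro mult_left_mono grid_sum_pow6_le assms) simp
  also have "\<dots> \<le> (4 * G\<^sup>2 * B) * (2 * B)"
    using nonneg by (intro mult_mono[OF l4 factor]) simp_all
  also have "\<dots> = 8 * G\<^sup>2 * B\<^sup>2"
    by (simp add: power2_eq_square)
  finally show ?thesis
    unfolding B_def E_def G_def L_def .
qed

lemma sqrt_sum_squares_diff_sq_le:
  "(sqrt (a\<^sup>2 + b\<^sup>2) - sqrt (c\<^sup>2 + d\<^sup>2))\<^sup>2 \<le> (a - c)\<^sup>2 + (b - d)\<^sup>2"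
proof -
  have "\<bar>cmod (Complex a b) - cmod (Complex c d)\<bar> \<le> cmod (Complex a b - Complex c d)"
    by (rule norm_triangle_ineq3)
  then have "\<bar>sqrt (a\<^sup>2 + b\<^sup>2) - sqrt (c\<^sup>2 + d\<^sup>2)\<bar> \<le> sqrt ((a - c)\<^sup>2 + (b - d)\<^sup>2)"
    by (simp add: cmod_def)
  then show ?thesis
    by (metis abs_le_square_iff abs_of_nonneg real_sqrt_ge_zero real_sqrt_pow2 sum_power2_ge_zero)
qed

definition dxy :: "real \<Rightarrow> (int \<Rightarrow> int \<Rightarrow> real) \<Rightarrow> int \<Rightarrow> int \<Rightarrow> real" where
  "dxy h v i j = (v (i + 1) (j + 1) - v (i + 1) j - v i (j + 1) + v i j) / h\<^sup>2"

lemma difference_ops_transpose: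
  "Dx h (\<lambda>i j. v j i) i j = Dy h v j i" "Dy h (\<lambda>i j. v j i) i j = Dx h v j i"
  "dxx h (\<lambda>i j. v j i) i j = dyy h v j i" "dyy h (\<lambda>i j. v j i) i j = dxx h v j i"
  "dxy h (\<lambda>i j. v j i) i j = dxy h v j i" "grad_abs h (\<lambda>i j. v j i) i j = grad_abs h v j i"
  unfolding Dx_def Dy_def dxx_def dyy_def dxy_def grad_abs_def by (simp_all add: add.commute)

lemma periodic_grid_difference_ops:
  assumes "periodic_grid M v"
  shows "periodic_grid M (dxx h v)" "periodic_grid M (dyy h v)" "periodic_grid M (dxy h v)"
    "periodic_grid M (grad_abs h v)"
  using periodic_gridD[OF assms]
  unfolding periodic_grid_def dxx_def dyy_def dxy_def grad_abs_def Dx_def Dy_def by simp_all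

lemma Dx_Dy_forward_diff:
  assumes "h \<noteq> 0"
  shows "Dx h v (i + 1) j - Dx h v i j = h / 2 * (dxx h v (i + 1) j + dxx h v i j)"
    "Dy h v (i + 1) j - Dy h v i j = h / 2 * (dxy h v i (j - 1) + dxy h v i j)"
  unfolding Dx_def Dy_def dxx_def dxy_def using assms by (simp_all add: field_simps power2_eq_square)

text \<open>The discrete form of \<open>\<integral> u\<^sub>x\<^sub>y\<^sup>2 = \<integral> u\<^sub>x\<^sub>x u\<^sub>y\<^sub>y\<close>, by a summation by parts in each direction.\<close>

lemma grid_sum_mixed_diff_sq:
  assumes "periodic_grid M v"
  shows "grid_sum M (\<lambda>i j. (v (i + 1) (j + 1) - v (i + 1) j - v i (j + 1) + v i j)\<^sup>2)
    = grid_sum M (\<lambda>i j. (v (i + 1) j - 2 * v i j + v (i - 1) j) * (v i (j + 1) - 2 * v i j + v i (j - 1)))"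
proof -
  define u where "u i j = v (i + 1) j - v i j" for i j
  define e where "e i j = v i (j + 1) - 2 * v i j + v i (j - 1)" for i j
  note periodic = periodic_gridD[OF assms]
  have "periodic_grid M (\<lambda>i j. u i j * e (i + 1) j)" "periodic_grid M (\<lambda>i j. u i (j + 1) * u i j)"
    "periodic_grid M (\<lambda>i j. (u i j)\<^sup>2)"
    unfolding periodic_grid_def u_def e_def using periodic by simp_all
  note shift = grid_sum_shift[OF this(1), where a = "-1" and b = 0]
    grid_sum_shift[OF this(2), where a = 0 and b = "-1"]
    grid_sum_shift[OF this(3), where a = 0 and b = 1]
  have "grid_sum M (\<lambda>i j. (v (i + 1) j - 2 * v i j + v (i - 1) j) * e i j)
      = grid_sum M (\<lambda>i j. u i j * e i j) - grid_sum M (\<lambda>i j. u (i - 1) j * e i j)"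
    unfolding u_def by (simp add: grid_sum_add[symmetric] grid_sum_cmult[symmetric, where c = "-1"] algebra_simps)
  also have "grid_sum M (\<lambda>i j. u (i - 1) j * e i j) = grid_sum M (\<lambda>i j. u i j * e (i + 1) j)"
    using shift(1) by simp
  also have "grid_sum M (\<lambda>i j. u i j * e i j) - grid_sum M (\<lambda>i j. u i j * e (i + 1) j)
      = 2 * grid_sum M (\<lambda>i j. (u i j)\<^sup>2) - grid_sum M (\<lambda>i j. u i (j + 1) * u i j)
        - grid_sum M (\<lambda>i j. u i j * u i (j - 1))"
    unfolding u_def e_def
    by (simp add: grid_sum_add[symmetric] grid_sum_cmult[symmetric] algebra_simps power2_eq_square)
  also have "grid_sum M (\<lambda>i j. u i j * u i (j - 1)) = grid_sum M (\<lambda>i j. u i (j + 1) * u i j)"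
    using shift(2) by (simp add: mult.commute)
  also have "2 * grid_sum M (\<lambda>i j. (u i j)\<^sup>2) - grid_sum M (\<lambda>i j. u i (j + 1) * u i j)
      - grid_sum M (\<lambda>i j. u i (j + 1) * u i j) = grid_sum M (\<lambda>i j. (u i (j + 1) - u i j)\<^sup>2)"
  proof -
    have "grid_sum M (\<lambda>i j. (u i (j + 1) - u i j)\<^sup>2) = grid_sum M (\<lambda>i j. (u i (j + 1))\<^sup>2)
        + grid_sum M (\<lambda>i j. (u i j)\<^sup>2) - 2 * grid_sum M (\<lambda>i j. u i (j + 1) * u i j)"
      by (simp add: grid_sum_add[symmetric] grid_sum_cmult[symmetric] algebra_simps power2_eq_square)
    with shift(3) show ?thesis
      by simp
  qed
  finally show ?thesis
    unfolding u_def e_def by (simp add: algebra_simps)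
qed

lemma grid_sum_dxy_sq:
  assumes "periodic_grid M v"
  shows "grid_sum M (\<lambda>i j. (dxy h v i j)\<^sup>2) = grid_sum M (\<lambda>i j. dxx h v i j * dyy h v i j)"
proof -
  have scaled: "(dxy h v i j)\<^sup>2 = 1 / h^4 * (v (i + 1) (j + 1) - v (i + 1) j - v i (j + 1) + v i j)\<^sup>2"
    "dxx h v i j * dyy h v i j
      = 1 / h^4 * ((v (i + 1) j - 2 * v i j + v (i - 1) j) * (v i (j + 1) - 2 * v i j + v i (j - 1)))"
    for i j
    unfolding dxy_def dxx_def dyy_def by (simp_all add: power_divide)
  show ?thesis
    by (simp only: scaled grid_sum_cmult grid_sum_mixed_diff_sq[OF assms])
qed

lemma grid_sum_grad_abs_forward_diff_sq_le:
  assumes "periodic_grid M v" "h \<noteq> 0"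
  shows "grid_sum M (\<lambda>i j. (grad_abs h v (i + 1) j - grad_abs h v i j)\<^sup>2)
    \<le> h\<^sup>2 * (grid_sum M (\<lambda>i j. (dxx h v i j)\<^sup>2) + grid_sum M (\<lambda>i j. (dxy h v i j)\<^sup>2))"
proof -
  have pointwise: "(grad_abs h v (i + 1) j - grad_abs h v i j)\<^sup>2
      \<le> h\<^sup>2 / 4 * ((dxx h v (i + 1) j + dxx h v i j)\<^sup>2 + (dxy h v i (j - 1) + dxy h v i j)\<^sup>2)" for i j
  proof -
    have "(grad_abs h v (i + 1) j - grad_abs h v i j)\<^sup>2
        \<le> (h / 2 * (dxx h v (i + 1) j + dxx h v i j))\<^sup>2 + (h / 2 * (dxy h v i (j - 1) + dxy h v i j))\<^sup>2"
      unfolding grad_abs_def Dx_Dy_forward_diff[OF assms(2), symmetric] by (rule sqrt_sum_squares_diff_sq_le)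
    also have "\<dots> = h\<^sup>2 / 4 * ((dxx h v (i + 1) j + dxx h v i j)\<^sup>2 + (dxy h v i (j - 1) + dxy h v i j)\<^sup>2)"
      unfolding power_mult_distrib by (simp add: power_divide distrib_left)
    finally show ?thesis .
  qed
  have squares_periodic: "periodic_grid M (\<lambda>i j. (dxx h v i j)\<^sup>2)" "periodic_grid M (\<lambda>i j. (dxy h v i j)\<^sup>2)"
    using periodic_grid_difference_ops[OF assms(1)] by (simp_all add: periodic_grid_comp[where \<phi> = power2])
  have avg_x: "grid_sum M (\<lambda>i j. (dxx h v (i + 1) j + dxx h v i j)\<^sup>2) \<le> 4 * grid_sum M (\<lambda>i j. (dxx h v i j)\<^sup>2)"
    by (rule grid_sum_sq_add_le) (use grid_sum_shift[OF squares_periodic(1), where a = 1 and b = 0] in simp)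
  have avg_y: "grid_sum M (\<lambda>i j. (dxy h v i (j - 1) + dxy h v i j)\<^sup>2) \<le> 4 * grid_sum M (\<lambda>i j. (dxy h v i j)\<^sup>2)"
    by (rule grid_sum_sq_add_le) (use grid_sum_shift[OF squares_periodic(2), where a = 0 and b = "-1"] in simp)
  have "grid_sum M (\<lambda>i j. (grad_abs h v (i + 1) j - grad_abs h v i j)\<^sup>2)
      \<le> h\<^sup>2 / 4 * (grid_sum M (\<lambda>i j. (dxx h v (i + 1) j + dxx h v i j)\<^sup>2)
        + grid_sum M (\<lambda>i j. (dxy h v i (j - 1) + dxy h v i j)\<^sup>2))"
    unfolding grid_sum_add[symmetric] grid_sum_cmult[symmetric] by (intro grid_sum_mono pointwise)
  also have "\<dots> \<le> h\<^sup>2 / 4 * (4 * grid_sum M (\<lambda>i j. (dxx h v i j)\<^sup>2) + 4 * grid_sum M (\<lambda>i j. (dxy h v i j)\<^sup>2))"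
    using avg_x avg_y by (intro mult_left_mono add_mono) simp_all
  finally show ?thesis
    by (simp add: algebra_simps)
qed

lemma grid_dirichlet_grad_abs_le:
  assumes "periodic_grid M v" "h \<noteq> 0"
  shows "grid_dirichlet M (grad_abs h v) \<le> (l2_norm h M (lap_h h v))\<^sup>2"
proof -
  let ?S = "\<lambda>f. grid_sum M (\<lambda>i j. (f i j)\<^sup>2)"
  have x_part: "grid_sum M (\<lambda>i j. (grad_abs h v (i + 1) j - grad_abs h v i j)\<^sup>2)
      \<le> h\<^sup>2 * (?S (dxx h v) + ?S (dxy h v))"
    using assms by (rule grid_sum_grad_abs_forward_diff_sq_le)
  have y_part: "grid_sum M (\<lambda>i j. (grad_abs h v i (j + 1) - grad_abs h v i j)\<^sup>2)
      \<le> h\<^sup>2 * (?S (dyy h v) + ?S (dxy h v))"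
    using grid_sum_grad_abs_forward_diff_sq_le[of M "\<lambda>i j. v j i" h] assms
      grid_sum_transpose[of M "\<lambda>i j. (grad_abs h v i (j + 1) - grad_abs h v i j)\<^sup>2"]
      grid_sum_transpose[of M "\<lambda>i j. (dyy h v i j)\<^sup>2"] grid_sum_transpose[of M "\<lambda>i j. (dxy h v i j)\<^sup>2"]
    by (simp add: difference_ops_transpose[of h v] periodic_grid_transpose[of M v])
  have "grid_dirichlet M (grad_abs h v) \<le> h\<^sup>2 * (?S (dxx h v) + 2 * ?S (dxy h v) + ?S (dyy h v))"
    using x_part y_part unfolding grid_dirichlet_def by (simp add: algebra_simps)
  also have "?S (dxx h v) + 2 * ?S (dxy h v) + ?S (dyy h v) = ?S (lap_h h v)"
    unfolding grid_sum_dxy_sq[OF assms(1)] lap_h_def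
    by (simp add: power2_sum grid_sum_add grid_sum_cmult mult.assoc)
  also have "h\<^sup>2 * ?S (lap_h h v) = (l2_norm h M (lap_h h v))\<^sup>2"
    unfolding l2_norm_def grid_sum_def by (simp add: sum_nonneg)
  finally show ?thesis .
qed

lemma powr_one_fourth_le:
  fixes Y u B :: real
  assumes "0 \<le> Y" "0 \<le> u" "0 \<le> B" "Y \<le> 4 * u\<^sup>2 * B"
  shows "Y powr (1/4) \<le> 2 * u powr (1/2) * B powr (1/4)"
proof -
  have "(4::real) powr (1/4) \<le> 4 powr (1/2)"
    by (rule powr_mono) auto
  then have four: "(4::real) powr (1/4) \<le> 2"
    by (simp add: powr_half_sqrt)
  have "Y powr (1/4) \<le> (4 * u\<^sup>2 * B) powr (1/4)"
    by (rule powr_mono2) (use assms in auto)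
  also have "\<dots> = 4 powr (1/4) * (u powr 2) powr (1/4) * B powr (1/4)"
    using assms by (simp add: powr_mult)
  also have "\<dots> \<le> 2 * u powr (1/2) * B powr (1/4)"
    using four by (simp add: powr_powr mult_right_mono)
  finally show ?thesis .
qed

lemma powr_one_sixth_le:
  fixes Y u B :: real
  assumes "0 \<le> Y" "0 \<le> u" "0 \<le> B" "Y \<le> 8 * u\<^sup>2 * B\<^sup>2"
  shows "Y powr (1/6) \<le> 2 * u powr (1/3) * B powr (1/3)"
proof -
  have "(8::real) powr (1/6) \<le> 8 powr (1/3)"
    by (rule powr_mono) auto
  also have "(8::real) powr (1/3) = (2 powr 3) powr (1/3)"
    by simp
  finally have eight: "(8::real) powr (1/6) \<le> 2"
    by (simp add: powr_powr)
  have "Y powr (1/6) \<le> (8 * u\<^sup>2 * B\<^sup>2) powr (1/6)"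
    by (rule powr_mono2) (use assms in auto)
  also have "\<dots> = 8 powr (1/6) * (u powr 2) powr (1/6) * (B powr 2) powr (1/6)"
    using assms by (simp add: powr_mult)
  also have "\<dots> \<le> 2 * u powr (1/3) * B powr (1/3)"
    using eight by (simp add: powr_powr mult_right_mono)
  finally show ?thesis .
qed

lemma grad_lq_numeral:
  "grad_lq h M (numeral n) v = (h\<^sup>2 * grid_sum M (\<lambda>i j. (grad_abs h v i j) ^ numeral n)) powr (1 / numeral n)"
  unfolding grad_lq_def grid_sum_def grad_abs_def by simp

lemma grad_lq_4_le:
  assumes "M \<ge> 1" "periodic_grid M v" "h > 0"
  shows "grad_lq h M 4 v \<le> 2 * (l2_norm h M (grad_abs h v)) powr (1/2)
    * (2 * (l2_norm h M (lap_h h v))\<^sup>2 + (l2_norm h M (grad_abs h v))\<^sup>2 / (h * real M)\<^sup>2) powr (1/4)"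
proof -
  let ?G = "l2_norm h M (grad_abs h v)" and ?P = "l2_norm h M (lap_h h v)" and ?L = "h * real M"
  have "periodic_grid M (grad_abs h v)" "\<And>i j. 0 \<le> grad_abs h v i j"
    using periodic_grid_difference_ops(4)[OF assms(2)] by (simp_all add: grad_abs_def)
  then have "h\<^sup>2 * grid_sum M (\<lambda>i j. (grad_abs h v i j)^4)
      \<le> 4 * ?G\<^sup>2 * (2 * grid_dirichlet M (grad_abs h v) + ?G\<^sup>2 / ?L\<^sup>2)"
    using assms(1,3) by (intro grid_l4_interpolation)
  also have "\<dots> \<le> 4 * ?G\<^sup>2 * (2 * ?P\<^sup>2 + ?G\<^sup>2 / ?L\<^sup>2)"
    using grid_dirichlet_grad_abs_le[OF assms(2)] assms(3) by (intro mult_left_mono add_right_mono) simp_all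
  finally show ?thesis
    unfolding grad_lq_numeral
    by (rule powr_one_fourth_le[rotated 3]) (simp_all add: grid_sum_nonneg l2_norm_def sum_nonneg)
qed

lemma grad_lq_6_le:
  assumes "M \<ge> 1" "periodic_grid M v" "h > 0"
  shows "grad_lq h M 6 v \<le> 2 * (l2_norm h M (grad_abs h v)) powr (1/3)
    * (16 * (l2_norm h M (lap_h h v))\<^sup>2 + (l2_norm h M (grad_abs h v))\<^sup>2 / (h * real M)\<^sup>2) powr (1/3)"
proof -
  let ?G = "l2_norm h M (grad_abs h v)" and ?P = "l2_norm h M (lap_h h v)" and ?L = "h * real M"
  have "periodic_grid M (grad_abs h v)" "\<And>i j. 0 \<le> grad_abs h v i j"
    using periodic_grid_difference_ops(4)[OF assms(2)] by (simp_all add: grad_abs_def)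
  then have "h\<^sup>2 * grid_sum M (\<lambda>i j. (grad_abs h v i j)^6)
      \<le> 8 * ?G\<^sup>2 * (16 * grid_dirichlet M (grad_abs h v) + ?G\<^sup>2 / ?L\<^sup>2)\<^sup>2"
    using assms(1,3) by (intro grid_l6_interpolation)
  also have "\<dots> \<le> 8 * ?G\<^sup>2 * (16 * ?P\<^sup>2 + ?G\<^sup>2 / ?L\<^sup>2)\<^sup>2"
    using grid_dirichlet_grad_abs_le[OF assms(2)] grid_dirichlet_nonneg[of M "grad_abs h v"] assms(3)
    by (intro mult_left_mono power_mono add_right_mono) simp_all
  finally show ?thesis
    unfolding grad_lq_numeral
    by (rule powr_one_sixth_le[rotated 3]) (simp_all add: grid_sum_nonneg l2_norm_def sum_nonneg)
qed

theorem lemma3p5: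
  fixes L :: real
  assumes "L > 0"
  shows "\<exists>K1 K2 :: real. K1 > 0 \<and> K2 > 0 \<and>
    (\<forall>(M::nat) (v :: int \<Rightarrow> int \<Rightarrow> real). M \<ge> 1 \<longrightarrow> periodic_grid M v \<longrightarrow>
      (let h = L / real M in
        grad_lq h M 4 v \<le> K1 * (l2_norm h M (grad_abs h v)) powr (1/2)
            * (2 * (l2_norm h M (lap_h h v))\<^sup>2 + (l2_norm h M (grad_abs h v))\<^sup>2 / L\<^sup>2) powr (1/4)
      \<and> grad_lq h M 6 v \<le> K2 * (l2_norm h M (grad_abs h v)) powr (1/3)
            * (16 * (l2_norm h M (lap_h h v))\<^sup>2 + (l2_norm h M (grad_abs h v))\<^sup>2 / L\<^sup>2) powr (1/3)))"
proof (intro exI[of _ "2::real"] conjI allI impI)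
  fix M :: nat and v :: "int \<Rightarrow> int \<Rightarrow> real"
  assume "M \<ge> 1" "periodic_grid M v"
  moreover have "L / real M > 0" "L / real M * real M = L"
    using assms \<open>M \<ge> 1\<close> by simp_all
  ultimately show "let h = L / real M in
        grad_lq h M 4 v \<le> 2 * (l2_norm h M (grad_abs h v)) powr (1/2)
            * (2 * (l2_norm h M (lap_h h v))\<^sup>2 + (l2_norm h M (grad_abs h v))\<^sup>2 / L\<^sup>2) powr (1/4)
      \<and> grad_lq h M 6 v \<le> 2 * (l2_norm h M (grad_abs h v)) powr (1/3)
            * (16 * (l2_norm h M (lap_h h v))\<^sup>2 + (l2_norm h M (grad_abs h v))\<^sup>2 / L\<^sup>2) powr (1/3)"
    using grad_lq_4_le grad_lq_6_le unfolding Let_def by metis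
qed simp_all

end
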